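(* Let $A\in\mathbb{C}$ and expand $$\exp\Big(u\Big(\frac{\mathcal{S}(u\hbar z\partial_z)}{\mathcal{S}(\hbar z\partial_z)}-1\Big)\log(z-A)\Big)=\sum_{k\ge0}\hbar^{2k}c_{2k}(u,z).$$ Then $c_0(u,z)=1$, and for $k\ge1$, writing the Laurent expansion in $z-A$ as $c_{2k}(u,z)=\sum_{l\in\mathbb{Z}}d_{2k,l}(u)(z-A)^{-l}$, for every $l>0$ one has $d_{2k,l}(u)=(u+1)u(u-1)\cdots(u-l+1)\,p_{2k,l}(u)$ for some polynomial $p_{2k,l}(u)\in\mathbb{C}[u]$.
   Context: $\mathcal{S}(w)=(e^{w/2}-e^{-w/2})/w$; the operator $\mathcal{S}(u\hbar z\partial_z)/\mathcal{S}(\hbar z\partial_z)$ is understood as its power series in $\hbar z\partial_z$ (coefficients polynomial in $u$), applied termwise to $\log(z-A)$. *)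

theory Defs
  imports "HOL-Complex_Analysis.Complex_Analysis" "HOL-Computational_Algebra.Computational_Algebra"
begin

definition S_fps :: "complex fps" where
  "S_fps = (fps_exp (1/2) - fps_exp (-1/2)) / fps_X"

text \<open>Power series in w = hbar z d/dz of u (S(u w)/S(w) - 1).\<close>
definition op_fps :: "complex \<Rightarrow> complex fps" where
  "op_fps u = fps_const u * ((S_fps oo (fps_const u * fps_X)) / S_fps - 1)"

definition zdz :: "(complex \<Rightarrow> complex) \<Rightarrow> complex \<Rightarrow> complex" where
  "zdz f = (\<lambda>z. z * deriv f z)"

text \<open>The exponent as a formal power series in hbar, evaluated at (u,z):
  coefficient of hbar^n is op_n(u) (z d/dz)^n log(z - A) (principal branch).\<close>
definition exponent_fps :: "complex \<Rightarrow> complex \<Rightarrow> complex \<Rightarrow> complex fps" where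
  "exponent_fps A u z =
     Abs_fps (\<lambda>n. fps_nth (op_fps u) n * (zdz ^^ n) (\<lambda>w. Ln (w - A)) z)"

definition c_coeff :: "complex \<Rightarrow> nat \<Rightarrow> complex \<Rightarrow> complex \<Rightarrow> complex" where
  "c_coeff A n u z = fps_nth (fps_exp 1 oo exponent_fps A u z) n"

end

theory Submission
  imports Defs
begin

(*
  Put x = 1/(z - A). For n >= 1 the iterate (z d/dz)^n log(z - A) is a polynomial in x, and the
  coefficients of the operator series are polynomials in u; so c_n(u, z) is a polynomial in u and x,
  and d_{n,l}(u) is its coefficient of x^l. It remains to show that d_{n,l} vanishes at
  u = -1, 0, ..., l - 1.
  Since S is even, the operator is zero at u = -1, hence c_n(-1, z) = 0 for n >= 1.
  For a natural number u = m, S(m w)/S(w) = sum_{j<m} exp(a_j w) with a_j = (m - 1 - 2j)/2, and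
  Taylor's formula along the flow z -> exp(a h) z of z d/dz turns the exponent into
  sum_{j<m} (log(exp(a_j h) z - A) - log(z - A)). Its exponential is the product of the factors
  (exp(a_j h) z - A)/(z - A) = exp(a_j h) + A x (exp(a_j h) - 1), so its coefficients in h have
  degree at most m in x. Comparing at the points z = A + 1/s, s > 0, gives d_{n,l}(m) = 0 for m < l.
*)

definition fps_map :: "('a \<Rightarrow> 'b) \<Rightarrow> 'a fps \<Rightarrow> 'b fps" where
  "fps_map f F = Abs_fps (\<lambda>n. f (F $ n))"

lemma fps_map_nth [simp]: "fps_map f F $ n = f (F $ n)"
  by (simp add: fps_map_def)

locale comm_ring_1_hom =
  fixes h :: "'a::comm_ring_1 \<Rightarrow> 'b::comm_ring_1"
  assumes hom_add: "h (a + b) = h a + h b"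
    and hom_mult: "h (a * b) = h a * h b"
    and hom_0: "h 0 = 0"
    and hom_1: "h 1 = 1"
begin

lemma hom_diff: "h (a - b) = h a - h b"
  using hom_add[of "a - b" b] by (simp add: algebra_simps)

lemma hom_sum: "h (sum f A) = (\<Sum>x\<in>A. h (f x))"
  by (induction A rule: infinite_finite_induct) (simp_all add: hom_0 hom_add)

lemma fps_map_const: "fps_map h (fps_const c) = fps_const (h c)"
  by (simp add: fps_eq_iff hom_0)

lemma fps_map_1: "fps_map h 1 = 1"
  by (simp add: fps_eq_iff fps_one_nth hom_0 hom_1)

lemma fps_map_diff: "fps_map h (F - G) = fps_map h F - fps_map h G"
  by (simp add: fps_eq_iff hom_diff)

lemma fps_map_mult: "fps_map h (F * G) = fps_map h F * fps_map h G"
  by (simp add: fps_eq_iff fps_mult_nth hom_sum hom_mult)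

lemma fps_map_power: "fps_map h (F ^ k) = fps_map h F ^ k"
  by (induction k) (simp_all add: fps_map_1 fps_map_mult)

lemma fps_map_prod: "fps_map h (prod F A) = (\<Prod>x\<in>A. fps_map h (F x))"
  by (induction A rule: infinite_finite_induct) (simp_all add: fps_map_1 fps_map_mult)

lemma fps_map_compose: "fps_map h (F oo G) = fps_map h F oo fps_map h G"
  by (simp add: fps_eq_iff fps_compose_nth hom_sum hom_mult flip: fps_map_power)

end

lemma comm_ring_1_hom_poly: "comm_ring_1_hom (\<lambda>p. poly p x)"
  by unfold_locales simp_all

lemma comm_ring_1_hom_poly_poly: "comm_ring_1_hom (\<lambda>P. poly (poly P [:x:]) u)"
  by unfold_locales simp_all

lemma degree_fps_mult_nth_le:
  fixes F G :: "'a::comm_semiring_1 poly fps"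
  assumes "\<And>k. degree (F $ k) \<le> d" "\<And>k. degree (G $ k) \<le> e"
  shows "degree ((F * G) $ n) \<le> d + e"
  unfolding fps_mult_nth
  by (intro degree_sum_le order.trans[OF degree_mult_le] add_mono assms) simp

lemma degree_fps_prod_nth_le:
  fixes F :: "'b \<Rightarrow> 'a::comm_semiring_1 poly fps"
  assumes "\<And>j k. j \<in> J \<Longrightarrow> degree (F j $ k) \<le> d j"
  shows "degree ((\<Prod>j\<in>J. F j) $ n) \<le> (\<Sum>j\<in>J. d j)"
  using assms
proof (induction J arbitrary: n rule: infinite_finite_induct)
  case (insert j J)
  then show ?case
    by (simp add: degree_fps_mult_nth_le)
qed (simp_all add: fps_one_nth)

lemma poly_map_poly_const_poly: "poly (map_poly (\<lambda>c. [:c:]) p) [:x:] = [:poly p x:]"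
  by (induction p) (simp_all add: map_poly_pCons mult.commute)

lemma poly_poly_eq_poly_map_poly:
  "poly (poly P [:x:]) u = poly (map_poly (\<lambda>p. poly p u) P) x"
  by (induction P) (simp_all add: map_poly_pCons)

lemma poly_eqI_infinite:
  fixes p q :: "'a::idom poly"
  assumes "infinite S" "\<And>x. x \<in> S \<Longrightarrow> poly p x = poly q x"
  shows "p = q"
proof (rule ccontr)
  assume "p \<noteq> q"
  then have "finite {x. poly (p - q) x = 0}"
    by (intro poly_roots_finite) simp
  moreover have "S \<subseteq> {x. poly (p - q) x = 0}"
    using assms(2) by auto
  ultimately show False
    using assms(1) finite_subset by blast
qed

lemma prod_linear_dvd_if_roots:
  fixes p :: "'a::idom poly"
  assumes "finite I" "inj_on r I" "\<And>i. i \<in> I \<Longrightarrow> poly p (r i) = 0"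
  shows "(\<Prod>i\<in>I. [:- r i, 1:]) dvd p"
  using assms
proof (induction I arbitrary: p rule: finite_induct)
  case (insert i I)
  then obtain q where q: "p = [:- r i, 1:] * q"
    by (metis dvdE poly_eq_0_iff_dvd insertI1)
  have "poly q (r i') = 0" if "i' \<in> I" for i'
  proof -
    have "r i' \<noteq> r i"
      using insert.prems(1) insert.hyps(2) that unfolding inj_on_def by blast
    moreover have "poly p (r i') = 0"
      using insert.prems(2) that by simp
    ultimately show ?thesis
      by (simp add: q)
  qed
  then have "(\<Prod>i\<in>I. [:- r i, 1:]) dvd q"
    using insert.IH insert.prems(1) by (simp add: inj_on_insert)
  then show ?case
    unfolding prod.insert[OF insert.hyps] q by (rule mult_dvd_mono[OF dvd_refl])
qed simp

lemma poly_inverse_eq_sum_powi: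
  fixes p :: "'a::field poly"
  assumes "degree p \<le> N"
  shows "poly p (1 / w) =
    (\<Sum>l\<in>{- int N..int N}. (if 0 \<le> l then coeff p (nat l) else 0) * w powi (- l))"
proof -
  have "poly p (1 / w) = (\<Sum>i\<le>N. coeff p i * w powi (- int i))"
    by (subst poly_as_sum_of_monoms'[OF assms, symmetric])
      (simp add: poly_sum poly_monom power_int_minus power_one_over inverse_eq_divide)
  also have "\<dots> = (\<Sum>l\<in>{0..int N}. (if 0 \<le> l then coeff p (nat l) else 0) * w powi (- l))"
    by (rule sum.reindex_bij_witness[of _ nat int]) auto
  also have "\<dots> = (\<Sum>l\<in>{- int N..int N}. (if 0 \<le> l then coeff p (nat l) else 0) * w powi (- l))"
    by (rule sum.mono_neutral_left) auto
  finally show ?thesis .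
qed

section \<open>The operator series\<close>

lemma S_fps_nth_0: "S_fps $ 0 = 1"
  by (simp add: S_fps_def)

lemma fps_X_times_S_compose_linear:
  "fps_X * (fps_const c * (S_fps oo (fps_const c * fps_X))) = fps_exp (c / 2) - fps_exp (- c / 2)"
proof -
  have X_times_S: "fps_X * S_fps = fps_exp (1 / 2) - fps_exp (- 1 / 2)"
    by (simp add: S_fps_def fps_eq_iff fps_X_mult_nth)
  have "fps_X * (fps_const c * (S_fps oo (fps_const c * fps_X)))
      = (fps_X * S_fps) oo (fps_const c * fps_X)"
    by (simp add: fps_compose_mult_distrib mult_ac)
  also have "\<dots> = fps_exp (c / 2) - fps_exp (- c / 2)"
    by (simp add: X_times_S fps_compose_sub_distrib)
  finally show ?thesis .
qed

lemma op_fps_unit_form: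
  "op_fps u = fps_const u * ((S_fps oo (fps_const u * fps_X)) * inverse S_fps - 1)"
  by (simp add: op_fps_def fps_divide_unit S_fps_nth_0)

lemma op_fps_nth_0: "op_fps u $ 0 = 0"
  by (simp add: op_fps_unit_form S_fps_nth_0)

definition op_poly_fps :: "complex poly fps" where
  "op_poly_fps = fps_const [:0, 1:] *
     (Abs_fps (\<lambda>n. monom (S_fps $ n) n) * fps_map (\<lambda>c. [:c:]) (inverse S_fps) - 1)"

lemma fps_map_op_poly_fps: "fps_map (\<lambda>p. poly p u) op_poly_fps = op_fps u"
proof -
  interpret comm_ring_1_hom "\<lambda>p. poly p u" by (rule comm_ring_1_hom_poly)
  have "fps_map (\<lambda>p. poly p u) (Abs_fps (\<lambda>n. monom (S_fps $ n) n)) = S_fps oo (fps_const u * fps_X)"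
    by (subst fps_compose_linear) (simp add: poly_monom mult.commute fps_map_def)
  moreover have "fps_map (\<lambda>p. poly p u) (fps_map (\<lambda>c. [:c:]) F) = F" for F
    by (simp add: fps_eq_iff)
  ultimately show ?thesis
    by (simp add: op_poly_fps_def op_fps_unit_form fps_map_mult fps_map_1 fps_map_diff
        fps_map_const)
qed

lemma op_fps_of_nat:
  "op_fps (of_nat m) = (\<Sum>j<m. fps_exp ((of_nat m - 1 - 2 * of_nat j) / 2)) - of_nat m"
proof -
  define c :: complex where "c = of_nat m"
  define F where "F = (\<Sum>j<m. fps_exp ((c - 1 - 2 * of_nat j) / 2))"
  define e where "e j = fps_exp ((c - 2 * of_nat j) / 2)" for j :: nat
  have "fps_exp ((c - 1 - 2 * of_nat j) / 2) * fps_exp (1 / 2) = e j"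
    and "fps_exp ((c - 1 - 2 * of_nat j) / 2) * fps_exp (- 1 / 2) = e (Suc j)" for j
    unfolding e_def fps_exp_add_mult[symmetric]
    by (rule arg_cong[where f = fps_exp], simp add: field_simps)+
  then have "F * (fps_exp (1 / 2) - fps_exp (- 1 / 2)) = (\<Sum>j<m. e j - e (Suc j))"
    by (simp add: F_def sum_distrib_right right_diff_distrib sum_subtractf)
  also have "\<dots> = fps_exp (c / 2) - fps_exp (- c / 2)"
    unfolding sum_lessThan_telescope' by (simp add: e_def c_def)
  also have "\<dots> = fps_X * (fps_const c * (S_fps oo (fps_const c * fps_X)))"
    by (rule fps_X_times_S_compose_linear[symmetric])
  finally have "fps_X * (F * S_fps) = fps_X * (fps_const c * (S_fps oo (fps_const c * fps_X)))"
    using fps_X_times_S_compose_linear[of 1] by (simp add: mult.left_commute)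
  then have "op_fps c = F * (S_fps * inverse S_fps) - fps_const c"
    by (simp add: op_fps_unit_form algebra_simps)
  then show ?thesis
    by (simp add: inverse_mult_eq_1' S_fps_nth_0 F_def c_def fps_of_nat)
qed

lemma op_fps_minus_one: "op_fps (- 1) = 0"
proof -
  have "fps_X * - (S_fps oo (- fps_X)) = fps_X * - S_fps"
    using fps_X_times_S_compose_linear[of "- 1"] fps_X_times_S_compose_linear[of 1]
    by (simp add: fps_const_neg[symmetric])
  then have "S_fps oo (- fps_X) = S_fps"
    by simp
  then show ?thesis
    by (simp add: op_fps_unit_form inverse_mult_eq_1' S_fps_nth_0 fps_const_neg[symmetric])
qed

section \<open>Taylor expansion along the flow of \<open>z d/dz\<close>\<close>

definition log_domain :: "complex \<Rightarrow> complex set" where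
  "log_domain A = {w. w - A \<notin> \<real>\<^sub>\<le>\<^sub>0}"

lemma open_log_domain: "open (log_domain A)"
proof -
  have "log_domain A = (\<lambda>w. w - A) -` (- \<real>\<^sub>\<le>\<^sub>0)"
    by (auto simp: log_domain_def)
  then show ?thesis
    by (auto intro!: continuous_open_vimage continuous_intros simp: open_Compl)
qed

lemma Ln_holomorphic_on_log_domain: "(\<lambda>w. Ln (w - A)) holomorphic_on log_domain A"
  by (intro holomorphic_on_Ln' holomorphic_intros) (auto simp: log_domain_def)

lemma zdz_holomorphic: "open S \<Longrightarrow> f holomorphic_on S \<Longrightarrow> zdz f holomorphic_on S"
  unfolding zdz_def by (intro holomorphic_intros holomorphic_deriv)

lemma funpow_zdz_holomorphic: "open S \<Longrightarrow> f holomorphic_on S \<Longrightarrow> (zdz ^^ n) f holomorphic_on S"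
  by (induction n) (simp_all add: zdz_holomorphic)

lemma zdz_cong:
  assumes "open S" "\<And>w. w \<in> S \<Longrightarrow> f w = g w" "w \<in> S"
  shows "zdz f w = zdz g w"
proof -
  have "eventually (\<lambda>x. f x = g x) (nhds w)"
    using eventually_nhds_in_open[OF assms(1,3)] by eventually_elim (use assms(2) in auto)
  then show ?thesis
    by (simp add: zdz_def deriv_cong_ev)
qed

text \<open>In the variable \<open>x = 1 / (w - A)\<close> the operator \<open>z d/dz\<close> is \<open>-(x + A x\<^sup>2) d/dx\<close>,
  and \<open>z d/dz log (z - A) = 1 + A x\<close>.\<close>

fun zdz_log_poly :: "complex \<Rightarrow> nat \<Rightarrow> complex poly" where
  "zdz_log_poly A 0 = [:1, A:]"
| "zdz_log_poly A (Suc n) = - [:0, 1, A:] * pderiv (zdz_log_poly A n)"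

lemma zdz_poly_inverse:
  assumes "w \<noteq> A"
  shows "zdz (\<lambda>w. poly p (1 / (w - A))) w = poly (- [:0, 1, A:] * pderiv p) (1 / (w - A))"
proof -
  define x where "x = 1 / (w - A)"
  have "((\<lambda>w. poly p (1 / (w - A))) has_field_derivative poly (pderiv p) x * - (x ^ 2)) (at w)"
    using assms unfolding x_def
    by (auto intro!: derivative_eq_intros DERIV_chain2[OF poly_DERIV]
        simp: power2_eq_square field_simps)
  then have "zdz (\<lambda>w. poly p (1 / (w - A))) w = poly (pderiv p) x * (- w * x ^ 2)"
    by (simp add: zdz_def DERIV_imp_deriv)
  also have "- w * x ^ 2 = - (x + A * x ^ 2)"
  proof -
    have "x \<noteq> 0" "w = 1 / x + A"
      using assms by (simp_all add: x_def)
    then show ?thesis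
      by (simp add: field_simps power2_eq_square)
  qed
  also have "poly (pderiv p) x * - (x + A * x ^ 2) = poly (- [:0, 1, A:] * pderiv p) x"
    by (simp add: algebra_simps power2_eq_square)
  finally show ?thesis
    by (simp only: x_def)
qed

lemma funpow_zdz_Ln:
  "w \<in> log_domain A \<Longrightarrow> (zdz ^^ Suc n) (\<lambda>w. Ln (w - A)) w = poly (zdz_log_poly A n) (1 / (w - A))"
proof (induction n arbitrary: w)
  case 0
  then have "w - A \<notin> \<real>\<^sub>\<le>\<^sub>0" "w \<noteq> A"
    by (auto simp: log_domain_def)
  then have "((\<lambda>w. Ln (w - A)) has_field_derivative 1 / (w - A)) (at w)"
    by (auto intro!: derivative_eq_intros simp: divide_inverse)
  then have "(zdz ^^ Suc 0) (\<lambda>w. Ln (w - A)) w = w / (w - A)"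
    by (simp add: zdz_def DERIV_imp_deriv)
  also have "\<dots> = 1 + A * (1 / (w - A))"
    using \<open>w \<noteq> A\<close> by (simp add: divide_simps)
  finally show ?case
    by simp
next
  case (Suc n)
  then have "w \<noteq> A"
    by (auto simp: log_domain_def)
  have "(zdz ^^ Suc (Suc n)) (\<lambda>w. Ln (w - A)) w = zdz (\<lambda>w. poly (zdz_log_poly A n) (1 / (w - A))) w"
    using zdz_cong[OF open_log_domain Suc.IH Suc.prems] by simp
  then show ?case
    using zdz_poly_inverse[OF \<open>w \<noteq> A\<close>] by simp
qed

lemma has_field_derivative_flow:
  assumes "open S" "g holomorphic_on S" "exp (a * h) * z \<in> S"
  shows "((\<lambda>h. g (exp (a * h) * z)) has_field_derivative a * zdz g (exp (a * h) * z)) (at h)"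
proof -
  have "((\<lambda>h. g (exp (a * h) * z)) has_field_derivative
          deriv g (exp (a * h) * z) * (a * exp (a * h) * z)) (at h)"
    by (rule DERIV_chain2[where g = "\<lambda>h. exp (a * h) * z", OF holomorphic_derivI[OF assms(2,1,3)]])
      (auto intro!: derivative_eq_intros)
  then show ?thesis
    by (simp add: zdz_def mult_ac)
qed

lemma higher_deriv_flow:
  assumes "open S" "g holomorphic_on S" "open U" "\<And>h. h \<in> U \<Longrightarrow> exp (a * h) * z \<in> S" "h \<in> U"
  shows "(deriv ^^ n) (\<lambda>h. g (exp (a * h) * z)) h = a ^ n * (zdz ^^ n) g (exp (a * h) * z)"
  using assms(5)
proof (induction n arbitrary: h)
  case (Suc n)
  have "eventually (\<lambda>h'. (deriv ^^ n) (\<lambda>h. g (exp (a * h) * z)) h'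
      = a ^ n * (zdz ^^ n) g (exp (a * h') * z)) (nhds h)"
    using eventually_nhds_in_open[OF assms(3) Suc.prems] by eventually_elim (rule Suc.IH)
  then have "(deriv ^^ Suc n) (\<lambda>h. g (exp (a * h) * z)) h
      = deriv (\<lambda>h'. a ^ n * (zdz ^^ n) g (exp (a * h') * z)) h"
    by (simp add: deriv_cong_ev)
  also have "\<dots> = a ^ n * (a * zdz ((zdz ^^ n) g) (exp (a * h) * z))"
    by (intro DERIV_imp_deriv DERIV_cmult has_field_derivative_flow[OF assms(1)]
        funpow_zdz_holomorphic[OF assms(1,2)] assms(4) Suc.prems)
  finally show ?case
    by (simp add: mult_ac)
qed simp

lemma has_fps_expansion_Ln_flow:
  assumes "z \<in> log_domain A"
  shows "(\<lambda>h. Ln (exp (a * h) * z - A)) has_fps_expansion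
           Abs_fps (\<lambda>n. a ^ n * (zdz ^^ n) (\<lambda>w. Ln (w - A)) z / fact n)"
proof -
  define U where "U = {h. exp (a * h) * z \<in> log_domain A}"
  have "open U"
    unfolding U_def by (rule continuous_open_vimage[OF open_log_domain, simplified vimage_def])
      (auto intro!: continuous_intros)
  moreover have "0 \<in> U"
    using assms by (simp add: U_def)
  ultimately have U: "open U" "0 \<in> U" .
  have "(\<lambda>h. Ln (exp (a * h) * z - A)) holomorphic_on U"
    by (intro holomorphic_on_compose_gen[OF _ Ln_holomorphic_on_log_domain, unfolded o_def]
        holomorphic_intros) (auto simp: U_def)
  then have "(\<lambda>h. Ln (exp (a * h) * z - A)) has_fps_expansion
      fps_expansion (\<lambda>h. Ln (exp (a * h) * z - A)) 0"
    using U by (intro has_fps_expansion_fps_expansion)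
  also have "fps_expansion (\<lambda>h. Ln (exp (a * h) * z - A)) 0
      = Abs_fps (\<lambda>n. a ^ n * (zdz ^^ n) (\<lambda>w. Ln (w - A)) z / fact n)"
    using higher_deriv_flow[OF open_log_domain Ln_holomorphic_on_log_domain U(1) _ U(2)]
    by (simp add: fps_expansion_def U_def)
  finally show ?thesis .
qed

section \<open>Natural values of \<open>u\<close>\<close>

text \<open>At \<open>x = 1 / (z - A)\<close> this is the Taylor series in \<open>h\<close> of \<open>(e^(a h) z - A) / (z - A)\<close>.\<close>

definition exp_factor_poly :: "complex \<Rightarrow> complex \<Rightarrow> complex poly fps" where
  "exp_factor_poly A a = Abs_fps (\<lambda>n. if n = 0 then 1 else smult (a ^ n / fact n) [:1, A:])"

lemma fps_map_exp_factor_poly: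
  "fps_map (\<lambda>p. poly p x) (exp_factor_poly A a) = fps_exp a + fps_const (A * x) * (fps_exp a - 1)"
  by (simp add: exp_factor_poly_def fps_eq_iff algebra_simps)

lemma degree_prod_exp_factor_poly_nth: "degree ((\<Prod>j<m. exp_factor_poly A (a j)) $ n) \<le> m"
  using degree_fps_prod_nth_le[of "{..<m}" "\<lambda>j. exp_factor_poly A (a j)" "\<lambda>_. 1"]
  by (simp add: exp_factor_poly_def)

lemma exponent_fps_exp_sum:
  assumes "op_fps u = (\<Sum>j<m. fps_exp (a j)) - of_nat m" "z \<in> log_domain A"
  shows "(\<lambda>h. \<Sum>j<m. Ln (exp (a j * h) * z - A) - Ln (z - A)) has_fps_expansion exponent_fps A u z"
proof -
  have "exponent_fps A u z = (\<Sum>j<m.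
      Abs_fps (\<lambda>n. a j ^ n * (zdz ^^ n) (\<lambda>w. Ln (w - A)) z / fact n) - fps_const (Ln (z - A)))"
    by (rule fps_ext) (simp add: exponent_fps_def assms(1) fps_sum_nth sum_distrib_right)
  also have "(\<lambda>h. \<Sum>j<m. Ln (exp (a j * h) * z - A) - Ln (z - A)) has_fps_expansion \<dots>"
    by (intro has_fps_expansion_sum has_fps_expansion_diff has_fps_expansion_Ln_flow assms(2)
        has_fps_expansion_const)
  finally show ?thesis .
qed

lemma exp_sum_Ln_flow_eventually:
  fixes m :: nat
  assumes "z \<noteq> A"
  shows "eventually (\<lambda>h. exp (\<Sum>j<m. Ln (exp (a j * h) * z - A) - Ln (z - A))
           = (\<Prod>j<m. exp (a j * h) + A / (z - A) * (exp (a j * h) - 1))) (nhds 0)"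
proof -
  have "eventually (\<lambda>h. h \<in> {h. exp (a j * h) * z - A \<noteq> 0}) (nhds 0)" for j
    using assms by (intro eventually_nhds_in_open open_Collect_neq continuous_intros) auto
  then have "eventually (\<lambda>h. \<forall>j\<in>{..<m}. exp (a j * h) * z - A \<noteq> 0) (nhds 0)"
    by (intro eventually_ball_finite) auto
  then show ?thesis
  proof eventually_elim
    case (elim h)
    have "(exp (a j * h) * z - A) / (z - A) = exp (a j * h) + A / (z - A) * (exp (a j * h) - 1)"
      for j
      using assms by (simp add: divide_simps) (simp add: algebra_simps)
    then show ?case
      using elim assms by (simp add: exp_sum exp_diff)
  qed
qed

lemma c_coeff_exp_sum:
  assumes "op_fps u = (\<Sum>j<m. fps_exp (a j)) - of_nat m" "z \<in> log_domain A"
  shows "c_coeff A n u z = poly ((\<Prod>j<m. exp_factor_poly A (a j)) $ n) (1 / (z - A))"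
proof -
  have "z \<noteq> A"
    using assms(2) by (auto simp: log_domain_def)
  have "(exp \<circ> (\<lambda>h. \<Sum>j<m. Ln (exp (a j * h) * z - A) - Ln (z - A))) has_fps_expansion
      (fps_exp 1 oo exponent_fps A u z)"
    by (intro has_fps_expansion_compose has_fps_expansion_exp1 exponent_fps_exp_sum assms)
      (simp add: exponent_fps_def op_fps_nth_0)
  then have "(\<lambda>h. \<Prod>j<m. exp (a j * h) + A / (z - A) * (exp (a j * h) - 1)) has_fps_expansion
      (fps_exp 1 oo exponent_fps A u z)"
    unfolding comp_def
    by (rule has_fps_expansion_cong[THEN iffD1, OF exp_sum_Ln_flow_eventually[OF \<open>z \<noteq> A\<close>] refl])
  moreover have "fps_map (\<lambda>p. poly p (1 / (z - A))) (\<Prod>j<m. exp_factor_poly A (a j))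
      = (\<Prod>j<m. fps_exp (a j) + fps_const (A / (z - A)) * (fps_exp (a j) - 1))"
    by (simp add: comm_ring_1_hom.fps_map_prod[OF comm_ring_1_hom_poly] fps_map_exp_factor_poly)
  then have "(\<lambda>h. \<Prod>j<m. exp (a j * h) + A / (z - A) * (exp (a j * h) - 1)) has_fps_expansion
      fps_map (\<lambda>p. poly p (1 / (z - A))) (\<Prod>j<m. exp_factor_poly A (a j))"
    by (simp only:) (intro fps_expansion_intros)
  ultimately have "fps_exp 1 oo exponent_fps A u z
      = fps_map (\<lambda>p. poly p (1 / (z - A))) (\<Prod>j<m. exp_factor_poly A (a j))"
    by (rule fps_expansion_unique_complex)
  then show ?thesis
    by (simp add: c_coeff_def)
qed

section \<open>The polynomial in \<open>u\<close> and \<open>1 / (z - A)\<close>\<close>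

text \<open>Coefficients in \<open>\<complex>[u][x]\<close>: the outer variable \<open>x\<close> stands for \<open>1 / (z - A)\<close>.\<close>

definition log_series_poly :: "complex \<Rightarrow> complex poly poly fps" where
  "log_series_poly A = Abs_fps (\<lambda>n. if n = 0 then 0
     else smult (op_poly_fps $ n) (map_poly (\<lambda>c. [:c:]) (zdz_log_poly A (n - 1))))"

definition c_poly :: "complex \<Rightarrow> nat \<Rightarrow> complex poly poly" where
  "c_poly A n = (fps_map (\<lambda>c. [:[:c:]:]) (fps_exp 1) oo log_series_poly A) $ n"

lemma c_coeff_eq_poly_c_poly:
  assumes "z \<in> log_domain A"
  shows "c_coeff A n u z = poly (map_poly (\<lambda>p. poly p u) (c_poly A n)) (1 / (z - A))"
proof -
  interpret comm_ring_1_hom "\<lambda>P. poly (poly P [:1 / (z - A):]) u"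
    by (rule comm_ring_1_hom_poly_poly)
  have "exponent_fps A u z = fps_map (\<lambda>P. poly (poly P [:1 / (z - A):]) u) (log_series_poly A)"
  proof (rule fps_ext)
    fix n
    show "exponent_fps A u z $ n
        = fps_map (\<lambda>P. poly (poly P [:1 / (z - A):]) u) (log_series_poly A) $ n"
    proof (cases n)
      case 0
      then show ?thesis
        by (simp add: exponent_fps_def log_series_poly_def op_fps_nth_0)
    next
      case (Suc k)
      then show ?thesis
        using funpow_zdz_Ln[OF assms, of k]
        by (simp add: exponent_fps_def log_series_poly_def poly_map_poly_const_poly
            flip: fps_map_op_poly_fps)
    qed
  qed
  moreover have "fps_map (\<lambda>P. poly (poly P [:1 / (z - A):]) u) (fps_map (\<lambda>c. [:[:c:]:]) (fps_exp 1))
      = fps_exp 1"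
    by (simp add: fps_eq_iff)
  ultimately have "fps_exp 1 oo exponent_fps A u z = fps_map (\<lambda>P. poly (poly P [:1 / (z - A):]) u)
      (fps_map (\<lambda>c. [:[:c:]:]) (fps_exp 1) oo log_series_poly A)"
    by (simp only: fps_map_compose)
  then show ?thesis
    by (simp add: c_coeff_def c_poly_def poly_poly_eq_poly_map_poly)
qed

section \<open>Roots of the Laurent coefficients\<close>

lemma map_poly_c_poly_eqI:
  assumes "\<And>z. z \<in> log_domain A \<Longrightarrow> c_coeff A n u z = poly R (1 / (z - A))"
  shows "map_poly (\<lambda>p. poly p u) (c_poly A n) = R"
proof (rule poly_eqI_infinite)
  show "infinite (of_real ` {0 <..} :: complex set)"
    using infinite_Ioi[of "0 :: real"] by (auto dest!: finite_imageD simp: inj_on_def)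
next
  fix x :: complex
  assume "x \<in> of_real ` {0 <..}"
  then obtain s where "s > 0" "x = of_real s"
    by auto
  then have "A + 1 / x - A = of_real (1 / s)" and "1 / (A + 1 / x - A) = x"
    by simp_all
  moreover have "of_real (1 / s) \<notin> \<real>\<^sub>\<le>\<^sub>0"
    using \<open>s > 0\<close> by simp
  ultimately have z: "A + 1 / x \<in> log_domain A" and "1 / (A + 1 / x - A) = x"
    by (simp_all only: log_domain_def mem_Collect_eq)
  then show "poly (map_poly (\<lambda>p. poly p u) (c_poly A n)) x = poly R x"
    using assms[OF z] c_coeff_eq_poly_c_poly[OF z] by simp
qed

lemma poly_coeff_c_poly_minus_one:
  assumes "n \<ge> 1"
  shows "poly (coeff (c_poly A n) l) (- 1) = 0"
proof -
  have "exponent_fps A (- 1) z = 0" for z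
    by (simp add: fps_eq_iff exponent_fps_def op_fps_minus_one)
  then have "map_poly (\<lambda>p. poly p (- 1)) (c_poly A n) = 0"
    using assms by (intro map_poly_c_poly_eqI) (simp add: c_coeff_def)
  then show ?thesis
    by (metis coeff_0 coeff_map_poly poly_0)
qed

lemma poly_coeff_c_poly_of_nat:
  assumes "m < l"
  shows "poly (coeff (c_poly A n) l) (of_nat m) = 0"
proof -
  define a where "a j = (of_nat m - 1 - 2 * of_nat j) / (2 :: complex)" for j
  have "map_poly (\<lambda>p. poly p (of_nat m)) (c_poly A n) = (\<Prod>j<m. exp_factor_poly A (a j)) $ n"
    by (intro map_poly_c_poly_eqI c_coeff_exp_sum) (simp_all add: op_fps_of_nat a_def)
  then have "poly (coeff (c_poly A n) l) (of_nat m) = coeff ((\<Prod>j<m. exp_factor_poly A (a j)) $ n) l"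
    by (metis coeff_map_poly poly_0)
  also have "\<dots> = 0"
    using le_less_trans[OF degree_prod_exp_factor_poly_nth assms] by (rule coeff_eq_0)
  finally show ?thesis .
qed

lemma coeff_c_poly_factor:
  assumes "n \<ge> 1" "l > 0"
  shows "\<exists>q. \<forall>u. poly (coeff (c_poly A n) l) u = (\<Prod>i=0..l. u + 1 - of_nat i) * poly q u"
proof -
  have "poly (coeff (c_poly A n) l) (of_nat i - 1) = 0" if "i \<in> {0..l}" for i
  proof (cases i)
    case 0
    then show ?thesis
      using poly_coeff_c_poly_minus_one[OF assms(1)] by simp
  next
    case (Suc m)
    then show ?thesis
      using poly_coeff_c_poly_of_nat[of m l] that by simp
  qed
  then have "(\<Prod>i=0..l. [:- (of_nat i - 1), 1:]) dvd coeff (c_poly A n) l"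
    by (intro prod_linear_dvd_if_roots) (auto simp: inj_on_def)
  then obtain q where "coeff (c_poly A n) l = (\<Prod>i=0..l. [:- (of_nat i - 1), 1:]) * q"
    by (elim dvdE)
  then have "poly (coeff (c_poly A n) l) u = (\<Prod>i=0..l. u + 1 - of_nat i) * poly q u" for u
    by (simp add: poly_prod algebra_simps)
  then show ?thesis
    by blast
qed

lemma c_coeff_Laurent_expansion:
  assumes "n \<ge> 1"
  shows "\<exists>(N::nat) (d :: int \<Rightarrow> complex \<Rightarrow> complex).
    (\<forall>u z. z - A \<notin> \<real>\<^sub>\<le>\<^sub>0 \<longrightarrow>
       c_coeff A n u z = (\<Sum>l\<in>{- int N..int N}. d l u * (z - A) powi (- l))) \<and>
    (\<forall>l u. \<bar>l\<bar> > int N \<longrightarrow> d l u = 0) \<and>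
    (\<forall>l>0. \<exists>p :: complex poly. \<forall>u. d l u = (\<Prod>i=0..nat l. u + 1 - of_nat i) * poly p u)"
proof -
  define C where "C = c_poly A n"
  define d where "d l u = (if 0 \<le> l then poly (coeff C (nat l)) u else 0)" for l u
  have "c_coeff A n u z = (\<Sum>l\<in>{- int (degree C)..int (degree C)}. d l u * (z - A) powi (- l))"
    if "z - A \<notin> \<real>\<^sub>\<le>\<^sub>0" for u z
    using that c_coeff_eq_poly_c_poly[of z A n u]
      poly_inverse_eq_sum_powi[OF map_poly_degree_leq, of "\<lambda>p. poly p u" C "z - A"]
    by (simp add: log_domain_def C_def d_def coeff_map_poly if_distrib cong: if_cong)
  moreover have "d l u = 0" if "\<bar>l\<bar> > int (degree C)" for l u
    using that by (simp add: d_def coeff_eq_0)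
  moreover have "\<exists>p. \<forall>u. d l u = (\<Prod>i=0..nat l. u + 1 - of_nat i) * poly p u" if "l > 0" for l
    using that coeff_c_poly_factor[OF assms, of "nat l" A] by (simp add: d_def C_def)
  ultimately show ?thesis
    by blast
qed

theorem lemma4p2:
  fixes A :: complex
  shows "(\<forall>u z. z - A \<notin> \<real>\<^sub>\<le>\<^sub>0 \<longrightarrow> c_coeff A 0 u z = 1) \<and>
    (\<forall>k::nat. k \<ge> 1 \<longrightarrow>
      (\<exists>(N::nat) (d :: int \<Rightarrow> complex \<Rightarrow> complex).
        (\<forall>u z. z - A \<notin> \<real>\<^sub>\<le>\<^sub>0 \<longrightarrow>
           c_coeff A (2 * k) u z = (\<Sum>l\<in>{- int N..int N}. d l u * (z - A) powi (- l))) \<and>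
        (\<forall>l u. \<bar>l\<bar> > int N \<longrightarrow> d l u = 0) \<and>
        (\<forall>l>0. \<exists>p :: complex poly. \<forall>u.
           d l u = (\<Prod>i=0..nat l. u + 1 - of_nat i) * poly p u)))"
proof (intro conjI allI impI)
  show "c_coeff A 0 u z = 1" for u z
    by (simp add: c_coeff_def)
qed (rule c_coeff_Laurent_expansion, simp)

end
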